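(* In the $k$-item $k$-bidder environment (any set of at most $k$ bidders may be allocated, and there are $k$ real bidders) with real bidder values drawn i.i.d. from the exponential distribution with mean $1$, the Deferred-Revelation Auction (DRA) over a public ledger, as described in the context, is not credible for any collateral $f<1$.
   Context: Bidders are quasi-linear with independent values; the exponential distribution with mean $1$ has CDF $1-e^{-t}$, virtual value $\varphi(v)=v-1$, monopoly reserve $1$. DRA over a public ledger (visible to all) with a perfectly hiding, perfectly binding, non-malleable commitment scheme: (1) every participant (real bidders and any fake bids fabricated by the auctioneer) commits to an identifier and a bid and deposits collateral $f$; the auctioneer declares a matroid feasibility constraint $\hat{\mathcal{F}}$ and distributions $\hat D_j$ (virtual values $\hat\varphi_j$) for all committed bids; (2) each committed bid is revealed or concealed, and collateral of concealed bids is burnt; (3) among revealed bids, the set $S\in\hat{\mathcal{F}}$ maximizing $\sum_{i\in S}\hat\varphi_i(b_i)$ (lexicographic tie-breaking) is allocated, each allocated bidder paying its critical bid (infimum bid at which it stays allocated). The auctioneer may fabricate bids, misreport distributions and constraint (keeping the allocated real bidders feasible in the true constraint), and choose which fake bids to conceal after seeing revealed real bids. Its revenue is real bidders' payments minus burnt collateral of its concealed fake bids. The DRA is credible for collateral $f$ if, when real bidders bid truthfully, the auctioneer maximizes expected revenue by fabricating no bids and reporting true distributions and constraint. *)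

theory Defs
  imports "HOL-Probability.Probability"
begin

text \<open>Participants are indexed by natural numbers: real bidders are 0..<k,
  fake bids fabricated by the auctioneer are k..<k+m.  All bids live in [0,\<infinity>).\<close>

definition matroid :: "nat set \<Rightarrow> nat set set \<Rightarrow> bool" where
  "matroid E I \<longleftrightarrow> finite E \<and> {} \<in> I \<and> (\<forall>S\<in>I. S \<subseteq> E) \<and>
     (\<forall>S T. T \<in> I \<longrightarrow> S \<subseteq> T \<longrightarrow> S \<in> I) \<and>
     (\<forall>S T. S \<in> I \<longrightarrow> T \<in> I \<longrightarrow> card S < card T \<longrightarrow> (\<exists>x\<in>T - S. insert x S \<in> I))"

definition valid_dist :: "(real \<Rightarrow> real) \<Rightarrow> bool" where
  "valid_dist p \<longleftrightarrow> (\<forall>t<0. p t = 0) \<and> (\<forall>t\<ge>0. 0 < p t) \<and>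
     continuous_on {0..} p \<and> (p has_integral 1) {0..}"

definition dcdf :: "(real \<Rightarrow> real) \<Rightarrow> real \<Rightarrow> real" where
  "dcdf p x = integral {0..x} p"

definition vvirt :: "(real \<Rightarrow> real) \<Rightarrow> real \<Rightarrow> real" where
  "vvirt p b = b - (1 - dcdf p b) / p b"

definition lex_pref :: "nat set \<Rightarrow> nat set \<Rightarrow> bool" where
  "lex_pref S T \<longleftrightarrow> (\<exists>j. j \<in> S \<and> j \<notin> T \<and> (\<forall>i<j. i \<in> S \<longleftrightarrow> i \<in> T))"

definition dra_alloc :: "nat set set \<Rightarrow> (nat \<Rightarrow> real \<Rightarrow> real) \<Rightarrow> nat set \<Rightarrow> (nat \<Rightarrow> real) \<Rightarrow> nat set" where
  "dra_alloc F phi R b =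
     (let cands = {S \<in> F. S \<subseteq> R};
          val = (\<lambda>S. \<Sum>i\<in>S. phi i (b i));
          opt = {S \<in> cands. \<forall>T\<in>cands. val T \<le> val S}
      in THE S. S \<in> opt \<and> (\<forall>T\<in>opt. T \<noteq> S \<longrightarrow> lex_pref S T))"

definition dra_crit :: "nat set set \<Rightarrow> (nat \<Rightarrow> real \<Rightarrow> real) \<Rightarrow> nat set \<Rightarrow> (nat \<Rightarrow> real) \<Rightarrow> nat \<Rightarrow> real" where
  "dra_crit F phi R b i = Inf {x. 0 \<le> x \<and> i \<in> dra_alloc F phi R (b(i := x))}"

text \<open>Auctioneer strategy: number of fake bids, fake bid values, declared densities of all
  committed bids, declared constraint, and concealment policy (a function of the revealed
  real bids).\<close>
record auct_strategy =
  nfake :: nat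
  fbid :: "nat \<Rightarrow> real"
  decl :: "nat \<Rightarrow> real \<Rightarrow> real"
  constr :: "nat set set"
  conceal :: "(nat \<Rightarrow> real) \<Rightarrow> nat set"

definition bidvec :: "nat \<Rightarrow> auct_strategy \<Rightarrow> (nat \<Rightarrow> real) \<Rightarrow> nat \<Rightarrow> real" where
  "bidvec k s v = (\<lambda>i. if i < k then v i else fbid s i)"

definition revealed :: "nat \<Rightarrow> auct_strategy \<Rightarrow> (nat \<Rightarrow> real) \<Rightarrow> nat set" where
  "revealed k s v = {0..<k + nfake s} - conceal s v"

definition dra_outcome :: "nat \<Rightarrow> auct_strategy \<Rightarrow> (nat \<Rightarrow> real) \<Rightarrow> nat set" where
  "dra_outcome k s v = dra_alloc (constr s) (\<lambda>i. vvirt (decl s i)) (revealed k s v) (bidvec k s v)"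

text \<open>Auctioneer revenue: payments of allocated real bidders minus burnt collateral of
  concealed fake bids.\<close>
definition revenue :: "nat \<Rightarrow> real \<Rightarrow> auct_strategy \<Rightarrow> (nat \<Rightarrow> real) \<Rightarrow> real" where
  "revenue k f s v =
     (\<Sum>i\<in>{..<k} \<inter> dra_outcome k s v.
        dra_crit (constr s) (\<lambda>i. vvirt (decl s i)) (revealed k s v) (bidvec k s v) i)
     - f * real (card (conceal s v))"

text \<open>Admissible deviations in the k-item k-bidder environment (true constraint: any set of at
  most k real bidders is feasible).\<close>
definition admissible :: "nat \<Rightarrow> auct_strategy \<Rightarrow> bool" where
  "admissible k s \<longleftrightarrow>
     (\<forall>i\<in>{k..<k + nfake s}. 0 \<le> fbid s i) \<and>
     (\<forall>i<k + nfake s. valid_dist (decl s i)) \<and>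
     matroid {0..<k + nfake s} (constr s) \<and>
     (\<forall>v. conceal s v \<subseteq> {k..<k + nfake s}) \<and>
     (\<forall>v. card (dra_outcome k s v \<inter> {..<k}) \<le> k)"

definition honest :: "nat \<Rightarrow> auct_strategy" where
  "honest k = \<lparr> nfake = 0, fbid = (\<lambda>_. 0), decl = (\<lambda>_. exponential_density 1),
                constr = {S. S \<subseteq> {0..<k} \<and> card S \<le> k}, conceal = (\<lambda>_. {}) \<rparr>"

definition bids_measure :: "nat \<Rightarrow> (nat \<Rightarrow> real) measure" where
  "bids_measure k = PiM {..<k} (\<lambda>_. density lborel (exponential_density 1))"

definition exp_revenue :: "nat \<Rightarrow> real \<Rightarrow> auct_strategy \<Rightarrow> real" where
  "exp_revenue k f s = integral\<^sup>L (bids_measure k) (revenue k f s)"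

definition dra_credible :: "nat \<Rightarrow> real \<Rightarrow> bool" where
  "dra_credible k f \<longleftrightarrow>
     (\<forall>s. admissible k s \<and> integrable (bids_measure k) (revenue k f s) \<longrightarrow>
          exp_revenue k f s \<le> exp_revenue k f (honest k))"

end

theory Submission
  imports Defs
begin

text \<open>The auctioneer commits one fake bid of value B > 1 that competes with bidder 0 for a
  shared slot (bidder 0 and the fake bid are never allocated together) and declares all
  distributions truthfully.  If 1 \<le> v0 < B it conceals the fake bid: the auction is then the
  honest one and only the collateral f is lost.  Otherwise it reveals the fake bid: for v0 < 1
  nothing changes, and for v0 \<ge> B bidder 0 pays B instead of the monopoly reserve 1.  The expected
  gain (B - 1) exp (-B) - f (exp (-1) - exp (-B)) = exp (-B) (t - f (exp t - 1)), where t = B - 1,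
  is positive for small t > 0 because f < 1.\<close>

lemma dcdf_exponential_density:
  assumes "0 < l" "0 \<le> x"
  shows "dcdf (exponential_density l) x = 1 - exp (- x * l)"
proof -
  have "((\<lambda>t. l * exp (- t * l)) has_integral (- exp (- x * l)) - (- exp (- 0 * l))) {0..x}"
    using assms
    by (intro fundamental_theorem_of_calculus)
       (auto simp flip: has_real_derivative_iff_has_vector_derivative intro!: derivative_eq_intros)
  then have "((\<lambda>t. l * exp (- t * l)) has_integral 1 - exp (- x * l)) {0..x}"
    by simp
  then have "(exponential_density l has_integral 1 - exp (- x * l)) {0..x}"
    by (rule has_integral_eq[rotated]) (auto simp: exponential_density_def)
  then show ?thesis
    by (simp add: dcdf_def integral_unique)
qed

text \<open>Below 0 the density vanishes, so the junk value of division by zero makes the virtual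
  value the identity there.\<close>

lemma vvirt_exponential_density:
  assumes "0 < l"
  shows "vvirt (exponential_density l) x = (if x < 0 then x else x - 1 / l)"
  using assms by (simp add: vvirt_def dcdf_exponential_density exponential_density_def)

lemma has_integral_exponential_density_atLeast:
  assumes l: "0 < l" and a: "0 \<le> a"
  shows "(exponential_density l has_integral exp (- a * l)) {a..}"
proof -
  have "((\<lambda>t. l * exp (- l * t)) has_integral l * (exp (- l * a) / l)) {a..}"
    using l by (intro has_integral_mult_right has_integral_exp_minus_to_infinity)
  then have "((\<lambda>t. l * exp (- t * l)) has_integral exp (- a * l)) {a..}"
    using l by (simp add: mult.commute)
  then show ?thesis
    by (rule has_integral_eq[rotated]) (use a in \<open>simp add: exponential_density_def\<close>)
qed

lemma valid_dist_exponential_density: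
  assumes l: "0 < l"
  shows "valid_dist (exponential_density l)"
proof -
  have "continuous_on {0..} (exponential_density l)"
    by (rule continuous_on_eq[of _ "\<lambda>t. l * exp (- t * l)"])
       (simp_all add: continuous_on_mult continuous_on_exp continuous_on_minus exponential_density_def)
  then show ?thesis
    using l has_integral_exponential_density_atLeast[OF l, of 0]
    by (simp add: valid_dist_def exponential_density_def)
qed

lemma measure_exponential_density_atLeast:
  assumes l: "0 < l" and a: "0 \<le> a"
  shows "measure (density lborel (exponential_density l)) {a..} = exp (- a * l)"
proof -
  have "emeasure (density lborel (exponential_density l)) {a..}
      = (\<integral>\<^sup>+ x. indicator {a..} x * exponential_density l x \<partial>lborel)"
    by (auto simp: emeasure_density intro!: nn_integral_cong split: split_indicator)
  also have "\<dots> = exp (- a * l)"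
    using l a by (intro nn_integral_has_integral_lebesgue has_integral_exponential_density_atLeast)
                 (auto simp: exponential_density_nonneg)
  finally show ?thesis
    by (simp add: measure_def)
qed

lemma vvirt_exponential_density_ge_iff:
  assumes "0 < l" "0 \<le> c"
  shows "c \<le> vvirt (exponential_density l) x \<longleftrightarrow> c + 1 / l \<le> x"
proof (cases "x < 0")
  case True
  have "0 < 1 / l"
    using assms(1) by simp
  moreover have "vvirt (exponential_density l) x = x"
    using True assms(1) by (simp add: vvirt_exponential_density)
  ultimately show ?thesis
    using True assms(2) by linarith
next
  case False
  then show ?thesis
    using assms(1) by (simp add: vvirt_exponential_density le_diff_eq)
qed

lemma vvirt_exponential_density_nonneg_iff: "0 \<le> vvirt (exponential_density 1) x \<longleftrightarrow> 1 \<le> x"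
  using vvirt_exponential_density_ge_iff[of 1 0] by simp

lemma integrable_exponential_density_indicator:
  assumes "0 < l" "A \<in> sets borel"
  shows "integrable (density lborel (exponential_density l)) (indicator A :: real \<Rightarrow> real)"
proof -
  interpret prob_space "density lborel (exponential_density l)"
    using assms(1) by (rule prob_space_exponential_density)
  show ?thesis
    using assms(2) by (intro integrable_real_indicator) (simp_all add: less_top[symmetric])
qed

lemma lex_pref_asym: "lex_pref S T \<Longrightarrow> \<not> lex_pref T S"
  unfolding lex_pref_def by (metis linorder_neqE_nat)

lemma lex_prefI:
  assumes "finite S" "S \<noteq> T" and earlier: "\<And>j. j \<in> T - S \<Longrightarrow> \<exists>i\<in>S - T. i < j"
  shows "lex_pref S T"
proof -
  have "S - T \<noteq> {}"
  proof
    assume "S - T = {}"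
    with assms(2) obtain j where "j \<in> T - S"
      by blast
    with earlier \<open>S - T = {}\<close> show False
      by blast
  qed
  define j where "j = Min (S - T)"
  have fin: "finite (S - T)"
    using assms(1) by simp
  have j: "j \<in> S - T" and j_least: "\<And>i. i \<in> S - T \<Longrightarrow> j \<le> i"
    using Min_in[OF fin \<open>S - T \<noteq> {}\<close>] Min_le[OF fin] by (simp_all add: j_def)
  have "i \<in> S \<longleftrightarrow> i \<in> T" if "i < j" for i
  proof
    assume "i \<in> S"
    with j_least[of i] that show "i \<in> T"
      by fastforce
  next
    assume "i \<in> T"
    show "i \<in> S"
    proof (rule ccontr)
      assume "i \<notin> S"
      with earlier[of i] \<open>i \<in> T\<close> obtain i' where "i' \<in> S - T" "i' < i"
        by blast
      with j_least[of i'] that show False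
        by simp
    qed
  qed
  with j show ?thesis
    unfolding lex_pref_def by blast
qed

lemma dra_alloc_eqI:
  assumes "S \<in> F" "S \<subseteq> R"
    and "\<And>T. T \<in> F \<Longrightarrow> T \<subseteq> R \<Longrightarrow> (\<Sum>i\<in>T. phi i (b i)) \<le> (\<Sum>i\<in>S. phi i (b i))"
    and "\<And>T. T \<in> F \<Longrightarrow> T \<subseteq> R \<Longrightarrow> (\<Sum>i\<in>T. phi i (b i)) = (\<Sum>i\<in>S. phi i (b i)) \<Longrightarrow> T \<noteq> S
           \<Longrightarrow> lex_pref S T"
  shows "dra_alloc F phi R b = S"
  unfolding dra_alloc_def Let_def
proof (rule the_equality)
  let ?opt = "{S \<in> {S \<in> F. S \<subseteq> R}. \<forall>T\<in>{S \<in> F. S \<subseteq> R}. (\<Sum>i\<in>T. phi i (b i)) \<le> (\<Sum>i\<in>S. phi i (b i))}"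
  have S_opt: "S \<in> ?opt"
    using assms(1-3) by blast
  moreover have S_best: "lex_pref S T" if "T \<in> ?opt" "T \<noteq> S" for T
    using that assms(3,4) S_opt by (simp add: order_antisym)
  ultimately show "S \<in> ?opt \<and> (\<forall>T\<in>?opt. T \<noteq> S \<longrightarrow> lex_pref S T)"
    by blast
  show "S' = S" if "S' \<in> ?opt \<and> (\<forall>T\<in>?opt. T \<noteq> S' \<longrightarrow> lex_pref S' T)" for S'
    using that S_opt S_best lex_pref_asym by blast
qed

lemma sum_le_sum_nonneg_part:
  fixes w :: "'a \<Rightarrow> real"
  assumes "finite X" "T \<subseteq> X"
  shows "sum w T \<le> sum w {i\<in>X. 0 \<le> w i}"
proof -
  let ?P = "{i\<in>X. 0 \<le> w i}"
  have "sum w T = sum w (T \<inter> ?P) + sum w (T - ?P)"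
    using assms by (meson finite_subset sum.Int_Diff)
  moreover have "sum w (T \<inter> ?P) \<le> sum w ?P"
    using assms by (intro sum_mono2) auto
  moreover have "sum w (T - ?P) \<le> 0"
    using assms by (intro sum_nonpos) auto
  ultimately show ?thesis
    by linarith
qed

lemma subset_nonneg_part_if_sum_eq:
  fixes w :: "'a \<Rightarrow> real"
  assumes "finite X" "T \<subseteq> X" and eq: "sum w T = sum w {i\<in>X. 0 \<le> w i}"
  shows "T \<subseteq> {i\<in>X. 0 \<le> w i}"
proof (rule ccontr)
  let ?P = "{i\<in>X. 0 \<le> w i}"
  assume "\<not> T \<subseteq> ?P"
  have fin: "finite T"
    using assms finite_subset by blast
  have "sum w T = sum w (T \<inter> ?P) + sum w (T - ?P)"
    using fin by (simp add: sum.Int_Diff)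
  moreover have "sum w (T \<inter> ?P) \<le> sum w ?P"
    using assms(1) by (intro sum_mono2) auto
  moreover have "sum w (T - ?P) < sum (\<lambda>_. 0) (T - ?P)"
    using fin \<open>\<not> T \<subseteq> ?P\<close> assms(2) by (intro sum_strict_mono) auto
  ultimately show False
    using eq by simp
qed

lemma dra_alloc_unconstrained:
  assumes "finite I" "{S \<in> F. S \<subseteq> R} = Pow I"
  shows "dra_alloc F phi R b = {i\<in>I. 0 \<le> phi i (b i)}"
proof (rule dra_alloc_eqI)
  let ?w = "\<lambda>i. phi i (b i)"
  have feasible: "T \<in> F \<and> T \<subseteq> R \<longleftrightarrow> T \<subseteq> I" for T
    using assms(2) by blast
  then show "{i\<in>I. 0 \<le> ?w i} \<in> F" "{i\<in>I. 0 \<le> ?w i} \<subseteq> R"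
    by auto
  fix T assume "T \<in> F" "T \<subseteq> R"
  then have "T \<subseteq> I"
    using feasible by blast
  then show "sum ?w T \<le> sum ?w {i\<in>I. 0 \<le> ?w i}"
    by (rule sum_le_sum_nonneg_part[OF assms(1)])
  assume "sum ?w T = sum ?w {i\<in>I. 0 \<le> ?w i}" "T \<noteq> {i\<in>I. 0 \<le> ?w i}"
  moreover from this(1) have "T \<subseteq> {i\<in>I. 0 \<le> ?w i}"
    by (rule subset_nonneg_part_if_sum_eq[OF assms(1) \<open>T \<subseteq> I\<close>])
  ultimately show "lex_pref {i\<in>I. 0 \<le> ?w i} T"
    using assms(1) by (intro lex_prefI) auto
qed

definition exclusive_pair :: "nat set \<Rightarrow> nat \<Rightarrow> nat \<Rightarrow> nat set set" where
  "exclusive_pair E a c = {S. S \<subseteq> E \<and> \<not> {a, c} \<subseteq> S}"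

lemma matroid_exclusive_pair:
  assumes "finite E"
  shows "matroid E (exclusive_pair E a c)"
  unfolding matroid_def
proof (intro conjI allI impI ballI)
  fix S T assume S: "S \<in> exclusive_pair E a c" and T: "T \<in> exclusive_pair E a c"
    and less: "card S < card T"
  have fin: "finite S" "finite T"
    using S T assms by (auto simp: exclusive_pair_def intro: finite_subset)
  have "card (S - T) < card (T - S)"
    using less card_Int_Diff[OF fin(1), of T] card_Int_Diff[OF fin(2), of S] by (simp add: Int_commute)
  then obtain x where x: "x \<in> T - S"
    by (metis all_not_in_conv card.empty not_less0)
  show "\<exists>x\<in>T - S. insert x S \<in> exclusive_pair E a c"
  proof (cases "T - S \<subseteq> {a, c}")
    case True
    with T have "T - S \<subseteq> {a} \<or> T - S \<subseteq> {c}"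
      by (auto simp: exclusive_pair_def)
    then have "card (T - S) \<le> 1"
      using card_mono[of "{a}" "T - S"] card_mono[of "{c}" "T - S"] by auto
    with \<open>card (S - T) < card (T - S)\<close> have "card (S - T) = 0"
      by linarith
    then have "S \<subseteq> T"
      using fin by simp
    moreover have "T - S \<subseteq> {x}"
      using \<open>card (T - S) \<le> 1\<close> x fin by (auto simp: card_le_Suc0_iff_eq)
    ultimately have "insert x S = T"
      using x by blast
    with T x show ?thesis
      by auto
  next
    case False
    then obtain y where "y \<in> T - S" "y \<notin> {a, c}"
      by blast
    with S T show ?thesis
      by (auto simp: exclusive_pair_def)
  qed
qed (use assms in \<open>auto simp: exclusive_pair_def\<close>)

lemma dra_alloc_exclusive_pair:
  fixes a c :: nat
  assumes fin: "finite I" and "a \<in> I" "c \<in> I" "a < c"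
    and feasible_eq: "{S \<in> F. S \<subseteq> R} = exclusive_pair I a c"
    and c_pos: "0 < phi c (b c)"
  shows "dra_alloc F phi R b =
    {i\<in>I - {a, c}. 0 \<le> phi i (b i)} \<union> (if phi c (b c) \<le> phi a (b a) then {a} else {c})"
proof (rule dra_alloc_eqI)
  let ?w = "\<lambda>i. phi i (b i)"
  let ?P = "{i\<in>I - {a, c}. 0 \<le> ?w i}"
  let ?S = "?P \<union> (if ?w c \<le> ?w a then {a} else {c})"
  have feasible: "T \<in> F \<and> T \<subseteq> R \<longleftrightarrow> T \<subseteq> I \<and> \<not> {a, c} \<subseteq> T" for T
    using feasible_eq unfolding exclusive_pair_def by blast
  then show "?S \<in> F" "?S \<subseteq> R"
    using \<open>a \<in> I\<close> \<open>c \<in> I\<close> \<open>a < c\<close> by auto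
  have sum_S: "sum ?w ?S = sum ?w ?P + max (?w a) (?w c)"
    using fin by (subst sum.union_disjoint) auto
  fix T assume "T \<in> F" "T \<subseteq> R"
  then have T: "T \<subseteq> I" "\<not> {a, c} \<subseteq> T"
    using feasible by blast+
  have "finite T"
    using T(1) fin by (rule finite_subset)
  then have sum_T: "sum ?w T = sum ?w (T \<inter> {a, c}) + sum ?w (T - {a, c})"
    by (rule sum.Int_Diff)
  have pair_cases: "T \<inter> {a, c} = {} \<or> T \<inter> {a, c} = {a} \<or> T \<inter> {a, c} = {c}"
    using T(2) by auto
  have pair_le: "sum ?w (T \<inter> {a, c}) \<le> max (?w a) (?w c)"
    using pair_cases c_pos by auto
  have rest_le: "sum ?w (T - {a, c}) \<le> sum ?w ?P"
    using fin T(1) by (intro sum_le_sum_nonneg_part) auto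
  show "sum ?w T \<le> sum ?w ?S"
    using sum_S sum_T pair_le rest_le by linarith
  assume "sum ?w T = sum ?w ?S" "T \<noteq> ?S"
  then have pair_eq: "sum ?w (T \<inter> {a, c}) = max (?w a) (?w c)"
    and rest_eq: "sum ?w (T - {a, c}) = sum ?w ?P"
    using sum_S sum_T pair_le rest_le by linarith+
  have "T - {a, c} \<subseteq> ?P"
    using subset_nonneg_part_if_sum_eq[of "I - {a, c}" "T - {a, c}" ?w] fin T(1) rest_eq by auto
  then have new: "j \<in> {a, c}" if "j \<in> T - ?S" for j
    using that by blast
  show "lex_pref ?S T"
  proof (rule lex_prefI)
    fix j assume j: "j \<in> T - ?S"
    show "\<exists>i\<in>?S - T. i < j"
    proof (cases "?w c \<le> ?w a")
      case True
      with j new[OF j] T(2) have "j = c" "a \<notin> T"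
        by auto
      with True \<open>a < c\<close> show ?thesis
        by auto
    next
      case False
      with j new[OF j] T(2) have "T \<inter> {a, c} = {a}"
        by auto
      with pair_eq False show ?thesis
        by simp
    qed
  qed (use fin \<open>T \<noteq> ?S\<close> in auto)
qed

definition dra_payment :: "nat set set \<Rightarrow> (nat \<Rightarrow> real \<Rightarrow> real) \<Rightarrow> nat set \<Rightarrow> (nat \<Rightarrow> real) \<Rightarrow> nat \<Rightarrow> real" where
  "dra_payment F phi R b i = (if i \<in> dra_alloc F phi R b then dra_crit F phi R b i else 0)"

lemma dra_payment_threshold:
  assumes "0 \<le> p" and threshold: "\<And>x. i \<in> dra_alloc F phi R (b(i := x)) \<longleftrightarrow> p \<le> x"
  shows "dra_payment F phi R b i = p * indicator {p..} (b i)"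
proof -
  have "dra_crit F phi R b i = Inf {p..}"
    unfolding dra_crit_def threshold using \<open>0 \<le> p\<close> by (intro arg_cong[where f = Inf]) auto
  moreover have "i \<in> dra_alloc F phi R b \<longleftrightarrow> p \<le> b i"
    using threshold[of "b i"] by simp
  ultimately show ?thesis
    by (simp add: dra_payment_def indicator_def)
qed

lemma revenue_eq_sum_payments:
  "revenue k f s v =
     (\<Sum>i<k. dra_payment (constr s) (\<lambda>i. vvirt (decl s i)) (revealed k s v) (bidvec k s v) i)
     - f * real (card (conceal s v))"
  unfolding revenue_def dra_payment_def dra_outcome_def
  by (simp add: sum.inter_restrict Int_commute)

lemma revenue_truthful_unconstrained:
  assumes revealed: "revealed k s v = {0..<k}"
    and feasible: "{S \<in> constr s. S \<subseteq> {0..<k}} = Pow {0..<k}"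
    and truthful: "\<And>i. decl s i = exponential_density 1"
  shows "revenue k f s v = (\<Sum>i<k. indicator {1..} (v i)) - f * real (card (conceal s v))"
proof -
  let ?phi = "\<lambda>i. vvirt (decl s i)"
  have alloc: "dra_alloc (constr s) ?phi {0..<k} b = {i\<in>{0..<k}. 1 \<le> b i}" for b
    using dra_alloc_unconstrained[OF finite_atLeastLessThan feasible]
    by (simp add: truthful vvirt_exponential_density_nonneg_iff)
  have "dra_payment (constr s) ?phi {0..<k} (bidvec k s v) i = indicator {1..} (v i)" if "i < k" for i
    using that by (subst dra_payment_threshold[where p = 1]) (auto simp: alloc bidvec_def)
  then show ?thesis
    by (simp add: revenue_eq_sum_payments revealed)
qed

lemma revenue_honest: "revenue k f (honest k) v = (\<Sum>i<k. indicator {1..} (v i))"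
proof -
  have "{S \<in> constr (honest k). S \<subseteq> {0..<k}} = Pow {0..<k}"
    using card_mono[of "{0..<k}"] by (fastforce simp: honest_def)
  then show ?thesis
    by (subst revenue_truthful_unconstrained) (simp_all add: honest_def revealed_def)
qed

definition fake_rival :: "nat \<Rightarrow> real \<Rightarrow> auct_strategy" where
  "fake_rival k B =
     \<lparr> nfake = 1, fbid = (\<lambda>_. B), decl = (\<lambda>_. exponential_density 1),
       constr = exclusive_pair {0..<k + 1} 0 k,
       conceal = (\<lambda>v. if 1 \<le> v 0 \<and> v 0 < B then {k} else {}) \<rparr>"

definition fake_rival_gain :: "real \<Rightarrow> real \<Rightarrow> real \<Rightarrow> real" where
  "fake_rival_gain f B x = (B - 1) * indicator {B..} x - f * indicator {1..<B} x"

lemma admissible_fake_rival: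
  assumes "1 \<le> k" "1 < B"
  shows "admissible k (fake_rival k B)"
proof -
  have "card (X \<inter> {..<k}) \<le> k" for X :: "nat set"
    by (metis card_lessThan card_mono finite_lessThan inf_le2)
  then show ?thesis
    using assms matroid_exclusive_pair[of "{0..<k + 1}" 0 k] valid_dist_exponential_density[of 1]
    by (simp add: admissible_def fake_rival_def)
qed

lemma dra_alloc_fake_rival:
  assumes "1 \<le> k" "1 < B" "b k = B"
  shows "dra_alloc (exclusive_pair {0..<k + 1} 0 k) (\<lambda>_. vvirt (exponential_density 1)) {0..<k + 1} b
    = {i\<in>{1..<k}. 1 \<le> b i} \<union> (if B \<le> b 0 then {0} else {k})"
proof -
  let ?phi = "vvirt (exponential_density 1)"
  have "?phi B = B - 1"
    using assms(2) by (simp add: vvirt_exponential_density)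
  then have "?phi B \<le> ?phi y \<longleftrightarrow> B \<le> y" for y
    using vvirt_exponential_density_ge_iff[of 1 "B - 1" y] assms(2) by simp
  moreover have "{0..<k + 1} - {0, k} = {1..<k}"
    by auto
  moreover have "dra_alloc (exclusive_pair {0..<k + 1} 0 k) (\<lambda>_. ?phi) {0..<k + 1} b
      = {i\<in>{0..<k + 1} - {0, k}. 0 \<le> ?phi (b i)} \<union> (if ?phi (b k) \<le> ?phi (b 0) then {0} else {k})"
    using assms \<open>?phi B = B - 1\<close> by (intro dra_alloc_exclusive_pair) (auto simp: exclusive_pair_def)
  ultimately show ?thesis
    using assms(3) by (simp add: vvirt_exponential_density_nonneg_iff)
qed

lemma sum_lessThan_split_first:
  fixes k :: nat
  assumes "0 < k"
  shows "(\<Sum>i<k. g i) = g 0 + (\<Sum>i\<in>{1..<k}. g i)"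
  using sum.atLeast_Suc_lessThan[OF assms, of g] by (simp add: lessThan_atLeast0)

lemma revenue_fake_rival:
  assumes "1 \<le> k" "1 < B"
  shows "revenue k f (fake_rival k B) v = revenue k f (honest k) v + fake_rival_gain f B (v 0)"
proof (cases "1 \<le> v 0 \<and> v 0 < B")
  case True
  then have "revenue k f (fake_rival k B) v = (\<Sum>i<k. indicator {1..} (v i)) - f"
    by (subst revenue_truthful_unconstrained) (auto simp: fake_rival_def revealed_def exclusive_pair_def)
  with True show ?thesis
    by (simp add: revenue_honest fake_rival_gain_def)
next
  case False
  let ?s = "fake_rival k B"
  let ?b = "bidvec k ?s v"
  let ?pay = "dra_payment (constr ?s) (\<lambda>i. vvirt (decl ?s i)) {0..<k + 1} ?b"
  have alloc: "dra_alloc (constr ?s) (\<lambda>i. vvirt (decl ?s i)) {0..<k + 1} (?b(i := x))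
      = {j\<in>{1..<k}. 1 \<le> (?b(i := x)) j} \<union> (if B \<le> (?b(i := x)) 0 then {0} else {k})" if "i < k" for i x
    using dra_alloc_fake_rival[OF assms, of "?b(i := x)"] that by (simp add: fake_rival_def bidvec_def)
  have "0 < k"
    using assms(1) by simp
  have "?pay 0 = B * indicator {B..} (?b 0)"
    using assms(2) alloc[OF \<open>0 < k\<close>] \<open>0 < k\<close> by (intro dra_payment_threshold) auto
  moreover have "?pay i = 1 * indicator {1..} (?b i)" if "i \<in> {1..<k}" for i
    using that alloc[of i] by (intro dra_payment_threshold) auto
  moreover have "revealed k ?s v = {0..<k + 1}" "conceal ?s v = {}"
    using False by (auto simp: revealed_def fake_rival_def)
  ultimately have "revenue k f ?s v = B * indicator {B..} (v 0) + (\<Sum>i\<in>{1..<k}. indicator {1..} (v i))"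
    using \<open>0 < k\<close> by (simp add: revenue_eq_sum_payments sum_lessThan_split_first bidvec_def)
  moreover have "indicator {1..} (v 0) = (indicator {B..} (v 0) :: real)" "v 0 \<notin> {1..<B}"
    using False assms(2) by (auto simp: indicator_def)
  ultimately show ?thesis
    using \<open>0 < k\<close> by (simp add: revenue_honest sum_lessThan_split_first fake_rival_gain_def algebra_simps)
qed

lemma
  fixes g :: "'a \<Rightarrow> 'b::{banach, second_countable_topology}"
  assumes "\<And>i. i \<in> I \<Longrightarrow> prob_space (M i)" "i \<in> I" "integrable (M i) g"
  shows integrable_PiM_component: "integrable (PiM I M) (\<lambda>\<omega>. g (\<omega> i))"
    and integral_PiM_component: "(\<integral>\<omega>. g (\<omega> i) \<partial>PiM I M) = integral\<^sup>L (M i) g"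
proof -
  have component: "(\<lambda>\<omega>. \<omega> i) \<in> measurable (PiM I M) (M i)"
    using assms(2) by (rule measurable_component_singleton)
  have g: "g \<in> borel_measurable (M i)"
    using assms(3) by (rule borel_measurable_integrable)
  have distr: "distr (PiM I M) (M i) (\<lambda>\<omega>. \<omega> i) = M i"
    using assms(1,2) by (rule distr_PiM_component)
  show "integrable (PiM I M) (\<lambda>\<omega>. g (\<omega> i))"
    using integrable_distr_eq[OF component g] distr assms(3) by simp
  show "(\<integral>\<omega>. g (\<omega> i) \<partial>PiM I M) = integral\<^sup>L (M i) g"
    using integral_distr[OF component g] distr by simp
qed

lemma integrable_revenue_honest: "integrable (bids_measure k) (revenue k f (honest k))"
  unfolding revenue_honest[abs_def] bids_measure_def
  by (intro Bochner_Integration.integrable_sum integrable_PiM_component integrable_exponential_density_indicator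
        prob_space_exponential_density) auto

lemma
  assumes "1 < B"
  shows integrable_fake_rival_gain:
      "integrable (density lborel (exponential_density 1)) (fake_rival_gain f B)"
    and integral_fake_rival_gain:
      "integral\<^sup>L (density lborel (exponential_density 1)) (fake_rival_gain f B)
         = (B - 1) * exp (- B) - f * (exp (- 1) - exp (- B))"
proof -
  let ?M = "density lborel (exponential_density 1)"
  interpret prob_space ?M
    by (rule prob_space_exponential_density) simp
  have "measure ?M {1..<B} = measure ?M ({1..} - {B..})"
    by (intro arg_cong[where f = "measure ?M"]) auto
  also have "\<dots> = exp (- 1) - exp (- B)"
    using assms by (subst finite_measure_Diff) (auto simp: measure_exponential_density_atLeast)
  finally have measure_between: "measure ?M {1..<B} = exp (- 1) - exp (- B)" .
  have indicator: "integrable ?M (indicator A :: real \<Rightarrow> real)" if "A \<in> sets borel" for A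
    using that by (rule integrable_exponential_density_indicator[of 1, simplified])
  show "integrable ?M (fake_rival_gain f B)"
    unfolding fake_rival_gain_def[abs_def]
    by (intro Bochner_Integration.integrable_diff integrable_mult_right indicator) auto
  show "integral\<^sup>L ?M (fake_rival_gain f B) = (B - 1) * exp (- B) - f * (exp (- 1) - exp (- B))"
    unfolding fake_rival_gain_def[abs_def]
    using indicator[of "{B..}"] indicator[of "{1..<B}"] assms
    by (simp add: measure_between measure_exponential_density_atLeast)
qed

lemma exists_pos_mult_exp_minus_one_less:
  fixes f :: real
  assumes "f < 1"
  obtains t where "0 < t" "f * (exp t - 1) < t"
proof (cases "f \<le> 0")
  case True
  then have "f * (exp 1 - 1) \<le> 0"
    by (simp add: mult_nonpos_nonneg)
  then show ?thesis
    using that[of 1] by simp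
next
  case False
  define t where "t = (1 - f) / 2"
  have t: "0 < t" "t \<le> 1"
    using assms False by (simp_all add: t_def)
  have "f * (exp t - 1) \<le> f * (t + t\<^sup>2)"
    using exp_bound[of t] t False by simp
  also have "\<dots> = t * (f * (1 + t))"
    by (simp add: algebra_simps power2_eq_square)
  also have "\<dots> < t"
  proof -
    have "f * (1 + t) = 1 - (1 - f) * (2 - f) / 2"
      by (simp add: t_def field_simps)
    also have "\<dots> < 1"
      using assms by simp
    finally show ?thesis
      using t by simp
  qed
  finally show ?thesis
    using that t by blast
qed

lemma exists_profitable_fake_bid:
  fixes f :: real
  assumes "f < 1"
  obtains B where "1 < B" "0 < (B - 1) * exp (- B) - f * (exp (- 1) - exp (- B))"
proof -
  obtain t where t: "0 < t" "f * (exp t - 1) < t"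
    using exists_pos_mult_exp_minus_one_less[OF assms] .
  have "exp (- 1) = exp (- (1 + t)) * exp t"
    by (simp flip: exp_add)
  then have "(1 + t - 1) * exp (- (1 + t)) - f * (exp (- 1) - exp (- (1 + t)))
      = exp (- (1 + t)) * (t - f * (exp t - 1))"
    by (simp add: algebra_simps)
  moreover have "0 < exp (- (1 + t)) * (t - f * (exp t - 1))"
    using t by simp
  ultimately show ?thesis
    using that[of "1 + t"] t by simp
qed

lemma
  assumes "1 \<le> k" "1 < B"
  shows integrable_revenue_fake_rival: "integrable (bids_measure k) (revenue k f (fake_rival k B))"
    and exp_revenue_fake_rival: "exp_revenue k f (fake_rival k B)
      = exp_revenue k f (honest k) + ((B - 1) * exp (- B) - f * (exp (- 1) - exp (- B)))"
proof -
  have integrable_gain: "integrable (bids_measure k) (\<lambda>v. fake_rival_gain f B (v 0))"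
    using assms unfolding bids_measure_def
    by (intro integrable_PiM_component integrable_fake_rival_gain prob_space_exponential_density) auto
  have expected_gain: "(\<integral>v. fake_rival_gain f B (v 0) \<partial>bids_measure k)
      = (B - 1) * exp (- B) - f * (exp (- 1) - exp (- B))"
    using assms unfolding bids_measure_def
    by (subst integral_PiM_component) (auto intro: prob_space_exponential_density integrable_fake_rival_gain
        simp: integral_fake_rival_gain)
  have revenue: "revenue k f (fake_rival k B) = (\<lambda>v. revenue k f (honest k) v + fake_rival_gain f B (v 0))"
    using revenue_fake_rival[OF assms] by blast
  show "integrable (bids_measure k) (revenue k f (fake_rival k B))"
    unfolding revenue using integrable_revenue_honest integrable_gain by (rule Bochner_Integration.integrable_add)
  show "exp_revenue k f (fake_rival k B)
      = exp_revenue k f (honest k) + ((B - 1) * exp (- B) - f * (exp (- 1) - exp (- B)))"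
    unfolding exp_revenue_def revenue using integrable_revenue_honest integrable_gain expected_gain by simp
qed

theorem mainTheorem5:
  fixes k :: nat and f :: real
  assumes "1 \<le> k" and "f < 1"
  shows "\<not> dra_credible k f"
proof
  assume "dra_credible k f"
  obtain B where "1 < B" and profit: "0 < (B - 1) * exp (- B) - f * (exp (- 1) - exp (- B))"
    using exists_profitable_fake_bid[OF assms(2)] .
  with \<open>dra_credible k f\<close> assms(1) have "exp_revenue k f (fake_rival k B) \<le> exp_revenue k f (honest k)"
    using admissible_fake_rival integrable_revenue_fake_rival unfolding dra_credible_def by blast
  with exp_revenue_fake_rival[OF assms(1) \<open>1 < B\<close>] profit show False
    by simp
qed

end
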